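(* Assume the steady state is isotropic (King model, or polytrope with $L_0=0=l$), so that $\mathrm{supp}\,\rho_0=[0,R_0]$. Suppose there are $S,c>0$ with $[0,S]\subset[0,R_0]$ and $\rho_0\ge c$ on $[0,S]$. Then for all $(E,L)\in\mathring\Omega_0^{EL}$ with $r_+(E,L)\le S$ and all $r\in[r_-(E,L),r_+(E,L)]$, $$E-\Psi_L(r)\ge\frac{2\pi}{3}c\,\frac{(r_+(E,L)-r)(r-r_-(E,L))(r+r_+(E,L)+r_-(E,L))}{r},$$ and consequently $T(E,L)\le\sqrt{3\pi/c}$ for all such $(E,L)$.
   Context: Spherically symmetric gravitational Vlasov–Poisson system. Let $(f_0,\rho_0,U_0)$ be a compactly supported steady state of finite mass of the form $f_0(x,v)=\varphi(E,L)$, $E=\tfrac12|v|^2+U_0(x)$, $L=|x\times v|^2$, where $U_0$ is spherically symmetric, $\Delta U_0=4\pi\rho_0$, $\rho_0(x)=\int f_0(x,v)dv$, $U_0(x)\to0$ as $|x|\to\infty$, and $\varphi$ is either a polytrope $\varphi(E,L)=(E_0-E)_+^k(L-L_0)_+^l$ with $E_0<0$ and either ($L_0>0$, $k>0$, $l>-1$, $k<l+\tfrac72$, $k+l+\tfrac12\ge0$) or ($L_0=0=l$, $0<k<\tfrac72$, convention $0^0=1$), or the King model $\varphi(E)=(e^{E_0-E}-1)_+$, $E_0<0$; here $t_+^k=t^k$ for $t>0$ and $0$ otherwise. $R_0$ is the radius of the spatial support. Let $\Omega_0=\{f_0>0\}$, $\Omega_0^{EL}=\{(E(x,v),L(x,v)):(x,v)\in\Omega_0\}$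 with interior $\mathring\Omega_0^{EL}$. Effective potential $\Psi_L(r)=U_0(r)+\frac{L}{2r^2}$; it has a unique minimizer $r_L>0$, and for $\Psi_L(r_L)<E<0$ the equation $\Psi_L(r)=E$ has exactly two solutions $r_-(E,L)<r_L<r_+(E,L)$. Period function $T(E,L)=2\int_{r_-(E,L)}^{r_+(E,L)}\frac{dr}{\sqrt{2E-2\Psi_L(r)}}$. *)

theory Defs
  imports "HOL-Analysis.Analysis" "HOL-Analysis.Cross3"
begin

definition pos_part :: "real \<Rightarrow> real" where
  "pos_part t = (if t > 0 then t else 0)"

definition king :: "real \<Rightarrow> real \<Rightarrow> real" where
  "king E0 E = pos_part (exp (E0 - E) - 1)"

text \<open>Polytrope with L0 = 0 = l: (E0-E)_+^k * (L)_+^0 with 0^0 = 1, i.e. (E0-E)_+^k.\<close>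
definition polytrope_iso :: "real \<Rightarrow> real \<Rightarrow> real \<Rightarrow> real" where
  "polytrope_iso E0 k E = (if E0 - E > 0 then (E0 - E) powr k else 0)"

definition energy :: "(real \<Rightarrow> real) \<Rightarrow> real^3 \<Rightarrow> real^3 \<Rightarrow> real" where
  "energy U0 x v = (norm v)\<^sup>2 / 2 + U0 (norm x)"

definition angmom :: "real^3 \<Rightarrow> real^3 \<Rightarrow> real" where
  "angmom x v = (norm (cross3 x v))\<^sup>2"

text \<open>Isotropic steady state f0(x,v) = phi(E), with radial profiles U0, rho0:
  rho0(x) = integral of f0(x,v) dv; spherically symmetric Poisson equation
  Delta U0 = 4 pi rho0 in its radial (integrated) form; U0 -> 0 at infinity;
  f0 compactly supported and of finite mass.\<close>
definition isotropic_steady_state ::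
  "(real \<Rightarrow> real) \<Rightarrow> (real \<Rightarrow> real) \<Rightarrow> (real \<Rightarrow> real) \<Rightarrow> bool" where
  "isotropic_steady_state phi U0 rho0 \<longleftrightarrow>
     (\<forall>x::real^3. (\<lambda>v::real^3. phi (energy U0 x v)) integrable_on UNIV \<and>
        rho0 (norm x) = integral UNIV (\<lambda>v::real^3. phi (energy U0 x v))) \<and>
     continuous_on {0..} U0 \<and>
     (\<forall>r>0. (U0 has_real_derivative
        (4 * pi / r\<^sup>2 * integral {0..r} (\<lambda>s. s\<^sup>2 * rho0 s))) (at r)) \<and>
     (U0 \<longlongrightarrow> 0) at_top \<and>
     bounded {p :: (real^3) \<times> (real^3). phi (energy U0 (fst p) (snd p)) > 0} \<and>
     (\<lambda>x::real^3. rho0 (norm x)) integrable_on UNIV"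

definition spatial_radius :: "(real \<Rightarrow> real) \<Rightarrow> real" where
  "spatial_radius rho0 = Sup {r. r \<ge> 0 \<and> rho0 r \<noteq> 0}"

definition OmegaEL :: "(real \<Rightarrow> real) \<Rightarrow> (real \<Rightarrow> real) \<Rightarrow> (real \<times> real) set" where
  "OmegaEL phi U0 = {(energy U0 x v, angmom x v) | x v. phi (energy U0 x v) > 0}"

definition Psi :: "(real \<Rightarrow> real) \<Rightarrow> real \<Rightarrow> real \<Rightarrow> real" where
  "Psi U0 L r = U0 r + L / (2 * r\<^sup>2)"

definition r_L :: "(real \<Rightarrow> real) \<Rightarrow> real \<Rightarrow> real" where
  "r_L U0 L = (THE r. r > 0 \<and> (\<forall>s>0. Psi U0 L r \<le> Psi U0 L s))"

definition r_minus :: "(real \<Rightarrow> real) \<Rightarrow> real \<Rightarrow> real \<Rightarrow> real" where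
  "r_minus U0 E L = (THE r. 0 < r \<and> r < r_L U0 L \<and> Psi U0 L r = E)"

definition r_plus :: "(real \<Rightarrow> real) \<Rightarrow> real \<Rightarrow> real \<Rightarrow> real" where
  "r_plus U0 E L = (THE r. r_L U0 L < r \<and> Psi U0 L r = E)"

definition period_integrand :: "(real \<Rightarrow> real) \<Rightarrow> real \<Rightarrow> real \<Rightarrow> real \<Rightarrow> real" where
  "period_integrand U0 E L r = 1 / sqrt (2 * E - 2 * Psi U0 L r)"

definition period :: "(real \<Rightarrow> real) \<Rightarrow> real \<Rightarrow> real \<Rightarrow> real" where
  "period U0 E L = 2 * integral {r_minus U0 E L .. r_plus U0 E L} (period_integrand U0 E L)"

end

theory Submission
  imports Defs
begin

(* Because phi is nonincreasing, rho0 r is a nonincreasing function of U0 r; this makes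
   rho0 measurable and bounded on compact intervals, so the reduced mass
   m r = integral_0^r s^2 rho0 s exists and Psi_L' r = (4 pi r m r - L) / r^3.
   As r m r is strictly increasing, Psi_L decreases up to a unique radius and increases
   afterwards, which yields r_L and the turning points r_- < r_L < r_+.
   The right-hand side R of the energy estimate vanishes at r_- and r_+, and
   r^3 (E - Psi_L - R)' = L - 4 pi r (m r - c r^3/3 + const) is nonincreasing on [r_-, r_+]
   because m grows at least like c r^3/3 there; a function vanishing at both ends whose
   derivative changes sign at most once from + to - is nonnegative in between.
   Dropping the factor (r + r_+ + r_-)/r >= 1 bounds the period integrand by
   (4 pi c/3 (r_+ - r)(r - r_-))^(-1/2), whose integral is pi / sqrt (4 pi c/3). *)

lemma measurable_bounded_if_antitone_along_continuous:
  fixes f u :: "real \<Rightarrow> real"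
  assumes u: "continuous_on {a..b} u"
    and anti: "\<And>s t. s \<in> {a..b} \<Longrightarrow> t \<in> {a..b} \<Longrightarrow> u s \<le> u t \<Longrightarrow> f t \<le> f s"
  shows "f \<in> borel_measurable (lebesgue_on {a..b})" "bounded (f ` {a..b})"
proof -
  have "f \<in> borel_measurable (lebesgue_on {a..b}) \<and> bounded (f ` {a..b})"
  proof (cases "a \<le> b")
    case False
    then show ?thesis by (simp add: measurable_def space_restrict_space)
  next
    case True
    obtain t1 where t1: "t1 \<in> {a..b}" "\<And>s. s \<in> {a..b} \<Longrightarrow> u t1 \<le> u s"
      using continuous_attains_inf[OF compact_Icc _ u] True by auto
    obtain t2 where t2: "t2 \<in> {a..b}" "\<And>s. s \<in> {a..b} \<Longrightarrow> u s \<le> u t2"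
      using continuous_attains_sup[OF compact_Icc _ u] True by auto
    define clamp where "clamp y = max (u t1) (min (u t2) y)" for y
    have "connected (u ` {a..b})"
      using u by (intro connected_continuous_image) auto
    then have clamp_in: "clamp y \<in> u ` {a..b}" for y
      using t1 t2 unfolding connected_iff_interval clamp_def
      by (metis (no_types, lifting) image_eqI max.cobounded1 max_def min.cobounded1 min.commute)
    have level: "\<exists>t\<in>{a..b}. u t = clamp y" for y
      using clamp_in[of y] by auto
    define g where "g y = - f (SOME t. t \<in> {a..b} \<and> u t = clamp y)" for y
    have g_at: "\<exists>t\<in>{a..b}. u t = clamp y \<and> g y = - f t" for y
      using someI_ex[OF level[of y, unfolded Bex_def]] unfolding g_def by blast
    have "mono g"
    proof
      fix y y' :: real assume "y \<le> y'"
      obtain t t' where "t \<in> {a..b}" "u t = clamp y" "g y = - f t"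
        "t' \<in> {a..b}" "u t' = clamp y'" "g y' = - f t'"
        using g_at by meson
      moreover have "clamp y \<le> clamp y'" using \<open>y \<le> y'\<close> unfolding clamp_def by auto
      ultimately show "g y \<le> g y'" using anti[of t t'] by auto
    qed
    have f_eq: "f s = - g (u s)" if "s \<in> {a..b}" for s
    proof -
      obtain t where "t \<in> {a..b}" "u t = clamp (u s)" "g (u s) = - f t" using g_at by blast
      moreover have "clamp (u s) = u s" using t1 t2 that unfolding clamp_def by auto
      ultimately show ?thesis using anti[of s t] anti[of t s] that by auto
    qed
    have "(\<lambda>s. - g (u s)) \<in> borel_measurable (lebesgue_on {a..b})"
      using measurable_compose[OF continuous_imp_measurable_on_sets_lebesgue[OF u]
          borel_measurable_mono[OF \<open>mono g\<close>]] by measurable simp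
    then have "f \<in> borel_measurable (lebesgue_on {a..b})"
      by (rule measurable_cong[THEN iffD1, rotated]) (simp add: f_eq space_restrict_space)
    moreover have "f ` {a..b} \<subseteq> {f t2..f t1}"
      using t1 t2 anti by auto
    ultimately show ?thesis
      using bounded_closed_interval bounded_subset by blast
  qed
  then show "f \<in> borel_measurable (lebesgue_on {a..b})" "bounded (f ` {a..b})" by auto
qed

lemma has_integral_inverse_sqrt_quadratic:
  assumes "a < b"
  shows "((\<lambda>x. 1 / sqrt ((b - x) * (x - a))) has_integral pi) {a..b}"
proof -
  define w where "w = b - a"
  have w: "w > 0" using assms unfolding w_def by auto
  define F where "F x = arcsin ((2*x - a - b) / w)" for x
  have "((\<lambda>x. 1 / sqrt ((b - x) * (x - a))) has_integral (F b - F a)) {a..b}"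
  proof (rule fundamental_theorem_of_calculus_interior)
    show "continuous_on {a..b} F" unfolding F_def
    proof (intro continuous_intros ballI)
      fix x assume "x \<in> {a..b}"
      then show "-1 \<le> (2*x - a - b) / w \<and> (2*x - a - b) / w \<le> 1"
        using w unfolding w_def by (auto simp: field_simps)
    qed (use w in auto)
    fix x assume x: "x \<in> {a<..<b}"
    define y where "y = (2*x - a - b) / w"
    have y: "-1 < y" "y < 1" using x w unfolding y_def w_def by (auto simp: field_simps)
    have "sqrt (1 - y\<^sup>2) = 2 * sqrt ((b - x) * (x - a)) / w"
    proof -
      have "w\<^sup>2 - (2*x - a - b)\<^sup>2 = 4 * ((b - x) * (x - a))"
        unfolding w_def by (simp add: algebra_simps power2_eq_square)
      then have "1 - y\<^sup>2 = 4 * ((b - x) * (x - a)) / w\<^sup>2"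
        using w unfolding y_def by (simp add: power_divide field_simps)
      then show ?thesis using x w by (simp add: real_sqrt_divide real_sqrt_mult)
    qed
    moreover have "(F has_real_derivative inverse (sqrt (1 - y\<^sup>2)) * (2 / w)) (at x)"
      unfolding F_def y_def
      by (rule DERIV_chain2[OF DERIV_arcsin]) (use y w in \<open>auto simp: y_def intro!: derivative_eq_intros\<close>)
    ultimately show "(F has_vector_derivative 1 / sqrt ((b - x) * (x - a))) (at x)"
      using x w by (simp add: has_real_derivative_iff_has_vector_derivative field_simps)
  qed (use assms in simp)
  moreover have "(2*b - a - b) / w = 1" "(2*a - a - b) / w = -1"
    using w unfolding w_def by (auto simp: field_simps)
  then have "F b - F a = pi"
    unfolding F_def by simp
  ultimately show ?thesis by simp
qed

lemma energy_gap_lower_bound: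
  fixes V M :: "real \<Rightarrow> real"
  assumes rm: "0 < rm" "rm < rp" and c: "0 \<le> c"
    and V_deriv: "\<And>r. rm \<le> r \<Longrightarrow> r \<le> rp \<Longrightarrow> (V has_real_derivative (4*pi*r*M r - L) / r^3) (at r)"
    and M_lb: "\<And>r. rm \<le> r \<Longrightarrow> r \<le> rp \<Longrightarrow> c * r^3 / 3 \<le> M r"
    and M_growth: "\<And>x y. rm \<le> x \<Longrightarrow> x \<le> y \<Longrightarrow> y \<le> rp \<Longrightarrow> c * (y^3 - x^3) / 3 \<le> M y - M x"
    and V_rm: "V rm = E" and V_rp: "V rp = E" and r: "r \<in> {rm..rp}"
  shows "2*pi/3 * c * ((rp - r) * (r - rm) * (r + rp + rm)) / r \<le> E - V r"
proof -
  define \<sigma> p where "\<sigma> = rp + rm" and "p = rp * rm"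
  define R where "R x = 2*pi/3 * c * (\<sigma>\<^sup>2 - p - x\<^sup>2 - p * \<sigma> / x)" for x
  define D where "D x = E - V x - R x" for x
  define D' where "D' x = - (4*pi*x*M x - L) / x^3 - 2*pi/3 * c * (p * \<sigma> / x\<^sup>2 - 2*x)" for x
  have R_eq: "R x = 2*pi/3 * c * ((rp - x) * (x - rm) * (x + rp + rm)) / x" if "x > 0" for x
    using that unfolding R_def \<sigma>_def p_def by (simp add: field_simps power2_eq_square)
  have D_deriv: "(D has_real_derivative D' x) (at x)" if "rm \<le> x" "x \<le> rp" for x
    unfolding D_def[abs_def] D'_def R_def using that rm
    by (auto intro!: derivative_eq_intros V_deriv simp: field_simps power2_eq_square)
  \<comment> \<open>\<open>x\<^sup>3 D' x\<close> is nonincreasing, so \<open>D\<close> cannot first decrease and then increase on \<open>[rm, rp]\<close>\<close>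
  have D'_scaled: "x^3 * D' x = L - 4*pi * (x * (M x - c*x^3/3 + c*p*\<sigma>/6))" if "x > 0" for x
    using that unfolding D'_def by (simp add: field_simps power2_eq_square power3_eq_cube)
  have D'_scaled_antimono: "y^3 * D' y \<le> x^3 * D' x" if "rm \<le> x" "x \<le> y" "y \<le> rp" for x y
  proof -
    have "0 \<le> c*p*\<sigma>" using c rm unfolding p_def \<sigma>_def by simp
    then have "0 \<le> M x - c*x^3/3 + c*p*\<sigma>/6" using M_lb[of x] that by simp
    moreover have "M x - c*x^3/3 \<le> M y - c*y^3/3" using M_growth[OF that] by (simp add: field_simps)
    ultimately have "x * (M x - c*x^3/3 + c*p*\<sigma>/6) \<le> y * (M y - c*y^3/3 + c*p*\<sigma>/6)"
      using that rm by (intro mult_mono) auto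
    then show ?thesis using D'_scaled[of x] D'_scaled[of y] that rm by simp
  qed
  have "D rm = 0" "D rp = 0" unfolding D_def using V_rm V_rp R_eq rm by simp_all
  have "0 \<le> D r"
  proof (rule ccontr)
    assume neg: "\<not> 0 \<le> D r"
    then have inner: "rm < r" "r < rp" using r \<open>D rm = 0\<close> \<open>D rp = 0\<close> by (auto simp: order.order_iff_strict)
    obtain z1 where z1: "rm < z1" "z1 < r" "D r - D rm = (r - rm) * D' z1"
      using MVT2[OF inner(1), of D D'] D_deriv inner by auto
    obtain z2 where z2: "r < z2" "z2 < rp" "D rp - D r = (rp - r) * D' z2"
      using MVT2[OF inner(2), of D D'] D_deriv inner by auto
    have "(r - rm) * D' z1 < 0" "0 < (rp - r) * D' z2"
      using z1 z2 neg \<open>D rm = 0\<close> \<open>D rp = 0\<close> by linarith+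
    then have "D' z1 < 0" "0 < D' z2"
      using inner by (simp_all add: mult_less_0_iff zero_less_mult_iff)
    then have "z1^3 * D' z1 < 0" "0 < z2^3 * D' z2"
      using z1 z2 rm by (auto intro: mult_pos_neg mult_pos_pos)
    moreover have "z2^3 * D' z2 \<le> z1^3 * D' z1" using z1 z2 by (intro D'_scaled_antimono) auto
    ultimately show False by linarith
  qed
  then show ?thesis unfolding D_def using R_eq[of r] r rm by simp
qed

lemma period_integral_le:
  fixes V :: "real \<Rightarrow> real"
  assumes c: "0 < c" and rm: "rm < rp"
    and V: "continuous_on {rm..rp} V" and V_rm: "V rm = E" and V_rp: "V rp = E"
    and gap: "\<And>r. r \<in> {rm..rp} \<Longrightarrow> 2*pi/3 * c * ((rp - r) * (r - rm)) \<le> E - V r"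
  shows "(\<lambda>r. 1 / sqrt (2*E - 2*V r)) integrable_on {rm..rp}"
    and "2 * integral {rm..rp} (\<lambda>r. 1 / sqrt (2*E - 2*V r)) \<le> sqrt (3*pi/c)"
proof -
  define K where "K = 1 / sqrt (4*pi*c/3)"
  have majorant: "((\<lambda>r. K * (1 / sqrt ((rp - r) * (r - rm)))) has_integral K * pi) {rm..rp}"
    by (intro has_integral_mult_right has_integral_inverse_sqrt_quadratic rm)
  have bound: "\<bar>1 / sqrt (2*E - 2*V r)\<bar> \<le> K * (1 / sqrt ((rp - r) * (r - rm)))"
    if r: "r \<in> {rm..rp}" for r
  proof (cases "r = rm \<or> r = rp")
    case False
    then have P: "0 < (rp - r) * (r - rm)" using r by auto
    have lb: "4*pi*c/3 * ((rp - r) * (r - rm)) \<le> 2*E - 2*V r" using gap[OF r] by simp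
    have pos: "0 < 4*pi*c/3 * ((rp - r) * (r - rm))" using P c by simp
    have "0 < 2*E - 2*V r" using lb pos by linarith
    then have "\<bar>1 / sqrt (2*E - 2*V r)\<bar> = 1 / sqrt (2*E - 2*V r)" by simp
    also have "\<dots> \<le> 1 / sqrt (4*pi*c/3 * ((rp - r) * (r - rm)))"
    proof -
      have "sqrt (4*pi*c/3 * ((rp - r) * (r - rm))) \<le> sqrt (2*E - 2*V r)" using lb by simp
      moreover have "0 < sqrt (4*pi*c/3 * ((rp - r) * (r - rm)))" using pos by simp
      ultimately show ?thesis
        using le_imp_inverse_le by (simp only: inverse_eq_divide[symmetric]) blast
    qed
    also have "\<dots> = K * (1 / sqrt ((rp - r) * (r - rm)))"
      unfolding K_def real_sqrt_mult[of "4*pi*c/3"] by simp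
    finally show ?thesis .
  qed (use V_rm V_rp in auto)
  have "V \<in> borel_measurable (lebesgue_on {rm..rp})"
    using V by (rule continuous_imp_measurable_on_sets_lebesgue) auto
  then have "(\<lambda>r. 1 / sqrt (2*E - 2*V r)) \<in> borel_measurable (lebesgue_on {rm..rp})"
    by measurable
  then show int: "(\<lambda>r. 1 / sqrt (2*E - 2*V r)) integrable_on {rm..rp}"
    by (rule measurable_bounded_by_integrable_imp_integrable_real
        [OF _ has_integral_integrable[OF majorant] bound]) auto
  have "integral {rm..rp} (\<lambda>r. 1 / sqrt (2*E - 2*V r)) \<le> K * pi"
    unfolding integral_unique[OF majorant, symmetric]
    by (rule integral_le[OF int has_integral_integrable[OF majorant]]) (meson abs_ge_self bound order_trans)
  moreover have "2 * (K * pi) = sqrt (3*pi/c)"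
  proof -
    have "sqrt (3*pi/c) * sqrt (4*pi*c/3) = sqrt ((2*pi)\<^sup>2)"
      using c by (simp add: real_sqrt_mult[symmetric] power2_eq_square field_simps)
    also have "\<dots> = 2*pi" by (simp only: real_sqrt_abs) simp
    finally show ?thesis unfolding K_def using c by (simp add: field_simps)
  qed
  ultimately show "2 * integral {rm..rp} (\<lambda>r. 1 / sqrt (2*E - 2*V r)) \<le> sqrt (3*pi/c)"
    by linarith
qed

lemma quadratic_le_cubic_over_r:
  fixes rm rp r c :: real
  assumes "0 < rm" "rm \<le> r" "r \<le> rp" "0 \<le> c"
  shows "2*pi/3 * c * ((rp - r) * (r - rm)) \<le> 2*pi/3 * c * ((rp - r) * (r - rm) * (r + rp + rm)) / r"
proof -
  have "(rp - r) * (r - rm) * 1 \<le> (rp - r) * (r - rm) * ((r + rp + rm) / r)"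
    using assms by (intro mult_left_mono) auto
  then have "2*pi/3 * c * ((rp - r) * (r - rm) * 1) \<le> 2*pi/3 * c * ((rp - r) * (r - rm) * ((r + rp + rm) / r))"
    using assms by (intro mult_left_mono) auto
  then show ?thesis
    by (simp only: mult_1_right times_divide_eq_right)
qed

locale isotropic_dense_core =
  fixes phi U0 rho0 :: "real \<Rightarrow> real" and E0 k S c :: real
  assumes E0: "E0 < 0"
    and ansatz: "phi = king E0 \<or> (0 < k \<and> k < 7/2 \<and> phi = polytrope_iso E0 k)"
    and steady: "isotropic_steady_state phi U0 rho0"
    and S: "S > 0" and c: "c > 0"
    and rho_lb: "\<forall>r\<in>{0..S}. rho0 r \<ge> c"
begin

lemma phi_nonneg: "0 \<le> phi E"
  using ansatz by (auto simp: king_def pos_part_def polytrope_iso_def)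

lemma phi_antimono: "E \<le> E' \<Longrightarrow> phi E' \<le> phi E"
  using ansatz by (auto simp: king_def pos_part_def polytrope_iso_def intro!: powr_mono2)

lemma phi_pos_imp_less: "0 < phi E \<Longrightarrow> E < E0"
  using ansatz by (auto simp: king_def pos_part_def polytrope_iso_def split: if_splits)

lemma
  shows phi_energy_integrable: "(\<lambda>v::real^3. phi (energy U0 x v)) integrable_on UNIV"
    and rho0_norm_eq: "rho0 (norm x) = integral UNIV (\<lambda>v::real^3. phi (energy U0 x v))"
    and U0_continuous_on: "continuous_on {0..} U0"
    and U0_has_derivative: "r > 0 \<Longrightarrow> (U0 has_real_derivative
          (4 * pi / r\<^sup>2 * integral {0..r} (\<lambda>s. s\<^sup>2 * rho0 s))) (at r)"
    and U0_tendsto: "(U0 \<longlongrightarrow> 0) at_top"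
  using steady unfolding isotropic_steady_state_def by auto

lemma
  assumes "0 \<le> s"
  shows rho0_eq: "rho0 s = integral UNIV (\<lambda>v::real^3. phi ((norm v)\<^sup>2 / 2 + U0 s))"
    and rho0_integrand_integrable: "(\<lambda>v::real^3. phi ((norm v)\<^sup>2 / 2 + U0 s)) integrable_on UNIV"
proof -
  obtain x :: "real^3" where "norm x = s" using vector_choose_size assms by blast
  then show "rho0 s = integral UNIV (\<lambda>v::real^3. phi ((norm v)\<^sup>2 / 2 + U0 s))"
    and "(\<lambda>v::real^3. phi ((norm v)\<^sup>2 / 2 + U0 s)) integrable_on UNIV"
    using rho0_norm_eq[of x] phi_energy_integrable[of x] by (simp_all add: energy_def)
qed

lemma rho0_nonneg: "0 \<le> s \<Longrightarrow> 0 \<le> rho0 s"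
  using rho0_eq rho0_integrand_integrable phi_nonneg by (simp add: integral_nonneg)

lemma rho0_antimono_potential: "0 \<le> s \<Longrightarrow> 0 \<le> t \<Longrightarrow> U0 s \<le> U0 t \<Longrightarrow> rho0 t \<le> rho0 s"
  unfolding rho0_eq by (intro integral_le rho0_integrand_integrable) (auto intro: phi_antimono)

lemma mass_integrand_integrable: "(\<lambda>s. s\<^sup>2 * rho0 s) integrable_on {0..b}"
proof -
  have U0: "continuous_on {0..b} U0"
    using U0_continuous_on by (rule continuous_on_subset) auto
  note rho0 = measurable_bounded_if_antitone_along_continuous[OF U0, of rho0]
  have "(\<lambda>s::real. s\<^sup>2) absolutely_integrable_on {0..b}"
    using absolutely_integrable_continuous_real[of 0 b "\<lambda>s::real. s\<^sup>2"]
    by (simp add: continuous_on_power)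
  then have "(\<lambda>s. rho0 s * s\<^sup>2) absolutely_integrable_on {0..b}"
    using rho0 rho0_antimono_potential
    by (intro absolutely_integrable_bounded_measurable_product_real) auto
  then show ?thesis
    by (simp add: absolutely_integrable_on_def mult.commute)
qed

text \<open>\<open>4 pi mass r\<close> is the mass inside the ball of radius \<open>r\<close>.\<close>
definition mass :: "real \<Rightarrow> real" where
  "mass r = integral {0..r} (\<lambda>s. s\<^sup>2 * rho0 s)"

lemma mass_diff: "0 \<le> x \<Longrightarrow> x \<le> y \<Longrightarrow> mass y - mass x = integral {x..y} (\<lambda>s. s\<^sup>2 * rho0 s)"
  using Henstock_Kurzweil_Integration.integral_combine[OF _ _ mass_integrand_integrable[of y]]
  unfolding mass_def by force

lemma mass_mono:
  assumes "0 \<le> x" "x \<le> y"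
  shows "mass x \<le> mass y"
proof -
  have "(\<lambda>s. s\<^sup>2 * rho0 s) integrable_on {x..y}"
    using assms by (intro integrable_on_subinterval[OF mass_integrand_integrable[of y]]) auto
  then have "0 \<le> integral {x..y} (\<lambda>s. s\<^sup>2 * rho0 s)"
    using assms by (intro integral_nonneg) (auto intro!: mult_nonneg_nonneg rho0_nonneg)
  then show ?thesis using mass_diff[OF assms] by simp
qed

lemma mass_growth:
  assumes "0 \<le> x" "x \<le> y" "y \<le> S"
  shows "c * (y^3 - x^3) / 3 \<le> mass y - mass x"
proof -
  have lower: "((\<lambda>s. c * s\<^sup>2) has_integral (c * y^3 / 3 - c * x^3 / 3)) {x..y}"
    using assms(2)
    by (intro fundamental_theorem_of_calculus)
      (auto intro!: derivative_eq_intros simp flip: has_real_derivative_iff_has_vector_derivative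
        simp: power2_eq_square power3_eq_cube)
  have "(\<lambda>s. s\<^sup>2 * rho0 s) integrable_on {x..y}"
    using assms by (intro integrable_on_subinterval[OF mass_integrand_integrable[of y]]) auto
  moreover have "c * s\<^sup>2 \<le> s\<^sup>2 * rho0 s" if "s \<in> {x..y}" for s
    using rho_lb that assms by (simp add: mult.commute mult_right_mono)
  ultimately have "c * y^3 / 3 - c * x^3 / 3 \<le> integral {x..y} (\<lambda>s. s\<^sup>2 * rho0 s)"
    by (intro has_integral_le[OF lower integrable_integral]) auto
  then show ?thesis using mass_diff[of x y] assms by (simp add: field_simps)
qed

lemma mass_lower_bound: "0 \<le> x \<Longrightarrow> x \<le> S \<Longrightarrow> c * x^3 / 3 \<le> mass x"
  using mass_growth[of 0 x] by (simp add: mass_def)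

lemma mass_pos:
  assumes "0 < x"
  shows "0 < mass x"
proof -
  have "0 < c * (min x S)^3 / 3" using assms S c by simp
  also have "\<dots> \<le> mass (min x S)" using assms S by (intro mass_lower_bound) auto
  also have "\<dots> \<le> mass x" using assms S by (intro mass_mono) auto
  finally show ?thesis .
qed

lemma Psi_has_derivative:
  assumes "0 < r"
  shows "(Psi U0 L has_real_derivative (4*pi*r*mass r - L) / r^3) (at r)"
proof -
  have "(Psi U0 L has_real_derivative 4*pi / r\<^sup>2 * mass r + L * (- (2 * (2*r)) / (2 * r\<^sup>2)\<^sup>2)) (at r)"
    unfolding Psi_def[abs_def] mass_def using assms
    by (auto intro!: derivative_eq_intros U0_has_derivative simp: power2_eq_square)
  moreover have "4*pi / r\<^sup>2 * mass r + L * (- (2 * (2*r)) / (2 * r\<^sup>2)\<^sup>2) = (4*pi*r*mass r - L) / r^3"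
    using assms by (simp add: field_simps power2_eq_square power3_eq_cube)
  ultimately show ?thesis by simp
qed

lemma Psi_continuous_on:
  assumes "0 < a"
  shows "continuous_on {a..b} (Psi U0 L)"
proof (intro continuous_at_imp_continuous_on ballI)
  fix r assume "r \<in> {a..b}"
  then have "0 < r" using assms by auto
  then show "isCont (Psi U0 L) r" by (rule DERIV_isCont[OF Psi_has_derivative])
qed

lemma r_mass_strict_mono: "0 < x \<Longrightarrow> x < y \<Longrightarrow> x * mass x < y * mass y"
  using mass_pos[of x] mass_mono[of x y] by (smt (verit) mult_strict_right_mono mult_left_mono)

definition balance_radius :: "real \<Rightarrow> real" where
  "balance_radius L = Inf {r. 0 < r \<and> L \<le> 4*pi*r*mass r}"

lemma
  assumes L: "0 < L"
  shows balance_radius_pos: "0 < balance_radius L"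
    and below_balance_radius: "0 < r \<Longrightarrow> r < balance_radius L \<Longrightarrow> 4*pi*r*mass r < L"
    and above_balance_radius: "balance_radius L < r \<Longrightarrow> L < 4*pi*r*mass r"
proof -
  define A where "A = {r. 0 < r \<and> L \<le> 4*pi*r*mass r}"
  have mS: "0 < mass S" using mass_pos S by simp
  define R where "R = max S (L / (4*pi*mass S))"
  have "R \<in> A"
  proof -
    have "L \<le> 4*pi*R*mass S" using mS unfolding R_def by (auto simp: field_simps max_def)
    also have "\<dots> \<le> 4*pi*R*mass R" using S mS unfolding R_def by (intro mult_left_mono mass_mono) auto
    finally show ?thesis using S unfolding A_def R_def by auto
  qed
  then have A: "A \<noteq> {}" "bdd_below A" unfolding A_def by (auto intro: bdd_belowI[of _ 0])
  define d where "d = min S (L / (8*pi*mass S))"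
  have "0 < d" using S L mS unfolding d_def by auto
  have "d \<le> r" if "r \<in> A" for r
  proof (rule ccontr)
    assume "\<not> d \<le> r"
    then have "4*pi*r*mass r \<le> 4*pi*d*mass S"
      using that S unfolding A_def d_def by (intro mult_mono mass_mono) (auto intro: less_imp_le mass_pos)
    also have "\<dots> \<le> L/2" using mS unfolding d_def by (auto simp: field_simps min_def)
    finally show False using that L unfolding A_def by auto
  qed
  then have "d \<le> balance_radius L"
    unfolding balance_radius_def A_def[symmetric] using A by (intro cInf_greatest) auto
  with \<open>0 < d\<close> show "0 < balance_radius L" by linarith
  show "4*pi*r*mass r < L" if "0 < r" "r < balance_radius L"
    using that cInf_lower[OF _ A(2), of r] unfolding balance_radius_def A_def[symmetric]
    by (force simp: A_def)
  show "L < 4*pi*r*mass r" if r: "balance_radius L < r"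
  proof -
    obtain r' where "r' \<in> A" "r' < r"
      using cInf_lessD[OF A(1)] r unfolding balance_radius_def A_def[symmetric] by blast
    moreover from this have "4*pi*r'*mass r' < 4*pi*r*mass r"
      using r_mass_strict_mono[of r' r] unfolding A_def by (simp add: mult.assoc)
    ultimately show ?thesis unfolding A_def mem_Collect_eq by linarith
  qed
qed

lemma Psi_strict_antimono:
  assumes "0 < L" "0 < x" "x < y" "y \<le> balance_radius L"
  shows "Psi U0 L y < Psi U0 L x"
proof (rule DERIV_neg_imp_decreasing_open[OF \<open>x < y\<close>])
  fix r assume "x < r" "r < y"
  then have "(4*pi*r*mass r - L) / r^3 < 0"
    using assms below_balance_radius[of L r] by (simp add: divide_neg_pos)
  then show "\<exists>D. (Psi U0 L has_real_derivative D) (at r) \<and> D < 0"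
    using Psi_has_derivative \<open>x < r\<close> assms by (meson less_trans)
qed (use assms in \<open>intro Psi_continuous_on\<close>)

lemma Psi_strict_mono:
  assumes "0 < L" "balance_radius L \<le> x" "x < y"
  shows "Psi U0 L x < Psi U0 L y"
proof (rule DERIV_pos_imp_increasing_open[OF \<open>x < y\<close>])
  have "0 < x" using balance_radius_pos assms by (meson less_le_trans)
  fix r assume "x < r" "r < y"
  then have "0 < (4*pi*r*mass r - L) / r^3"
    using assms \<open>0 < x\<close> above_balance_radius[of L r] by simp
  then show "\<exists>D. (Psi U0 L has_real_derivative D) (at r) \<and> 0 < D"
    using Psi_has_derivative \<open>x < r\<close> \<open>0 < x\<close> by (meson less_trans)
next
  show "continuous_on {x..y} (Psi U0 L)"
    using balance_radius_pos assms by (intro Psi_continuous_on) (meson less_le_trans)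
qed

lemma Psi_balance_radius_less:
  assumes "0 < L" "0 < r" "r \<noteq> balance_radius L"
  shows "Psi U0 L (balance_radius L) < Psi U0 L r"
  using Psi_strict_antimono[of L r "balance_radius L"] Psi_strict_mono[of L "balance_radius L" r] assms
  by linarith

lemma r_L_eq_balance_radius:
  assumes "0 < L"
  shows "r_L U0 L = balance_radius L"
  unfolding r_L_def
proof (rule the_equality)
  show "0 < balance_radius L \<and> (\<forall>s>0. Psi U0 L (balance_radius L) \<le> Psi U0 L s)"
    using assms balance_radius_pos Psi_balance_radius_less by force
  show "r = balance_radius L" if "0 < r \<and> (\<forall>s>0. Psi U0 L r \<le> Psi U0 L s)" for r
    using that assms balance_radius_pos[OF assms] Psi_balance_radius_less[of L r] by force
qed

lemma interior_OmegaEL: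
  assumes "(E, L) \<in> interior (OmegaEL phi U0)"
  shows "0 < L" "E < E0" "\<exists>r>0. Psi U0 L r < E"
proof -
  obtain e where e: "0 < e" "ball (E, L) e \<subseteq> OmegaEL phi U0"
    using assms mem_interior by blast
  have "(E, L - e/2) \<in> ball (E, L) e" "(E - e/2, L) \<in> ball (E, L) e"
    using e by (simp_all add: dist_Pair_Pair dist_real_def)
  then have in_Omega: "(E, L - e/2) \<in> OmegaEL phi U0" "(E - e/2, L) \<in> OmegaEL phi U0"
    using e by auto
  then obtain x v where "L - e/2 = angmom x v" unfolding OmegaEL_def by auto
  moreover have "0 \<le> angmom x v" unfolding angmom_def by simp
  ultimately show L: "0 < L" using e by linarith
  show "E < E0"
    using assms interior_subset phi_pos_imp_less unfolding OmegaEL_def by fastforce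
  obtain x v where xv: "E - e/2 = energy U0 x v" "L = angmom x v"
    using in_Omega(2) unfolding OmegaEL_def by auto
  have "x \<noteq> 0" using xv L unfolding angmom_def by auto
  then have x: "0 < norm x" by simp
  \<comment> \<open>\<open>|x \<times> v| \<le> |x| |v|\<close>: the centrifugal term never exceeds the kinetic energy\<close>
  have "L \<le> (norm x * norm v)\<^sup>2"
    using xv(2) norm_cross_dot[of x v] unfolding angmom_def by (smt (verit) zero_le_power2)
  then have "L / (2 * (norm x)\<^sup>2) \<le> (norm v)\<^sup>2 / 2"
    using x by (simp add: divide_simps power_mult_distrib) (simp add: algebra_simps)
  then have "Psi U0 L (norm x) < E" using xv(1) e unfolding Psi_def energy_def by simp
  then show "\<exists>r>0. Psi U0 L r < E" using x by blast
qed

lemma Psi_tendsto_zero: "(Psi U0 L \<longlongrightarrow> 0) at_top"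
proof -
  have "filterlim (\<lambda>r::real. 2 * r\<^sup>2) at_top at_top"
    by (intro filterlim_tendsto_pos_mult_at_top[OF tendsto_const] filterlim_pow_at_top filterlim_ident) auto
  then have "((\<lambda>r::real. L / (2 * r\<^sup>2)) \<longlongrightarrow> 0) at_top"
    by (intro tendsto_divide_0[OF tendsto_const] filterlim_at_top_imp_at_infinity)
  then show ?thesis unfolding Psi_def[abs_def] using tendsto_add[OF U0_tendsto] by fastforce
qed

lemma Psi_large_near_zero:
  assumes "0 < L" "0 < a"
  obtains r where "0 < r" "r < a" "E \<le> Psi U0 L r"
proof -
  have "continuous_on {0..a} U0" using U0_continuous_on by (rule continuous_on_subset) auto
  then obtain t where t: "\<And>s. s \<in> {0..a} \<Longrightarrow> U0 t \<le> U0 s"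
    using continuous_attains_inf[OF compact_Icc] assms by (metis atLeastAtMost_iff empty_iff less_imp_le order_refl)
  define K where "K = \<bar>E - U0 t\<bar> + 1"
  define r where "r = min (a/2) (min 1 (L / (2*K)))"
  have K: "0 < K" unfolding K_def by auto
  have r: "0 < r" "r < a" "r \<le> 1" "r \<le> L / (2*K)"
    using assms K unfolding r_def by auto
  have "r\<^sup>2 \<le> L / (2*K)" using r by (smt (verit) mult_left_le power2_eq_square)
  then have "K \<le> L / (2 * r\<^sup>2)" using K r by (simp add: field_simps)
  moreover have "U0 t \<le> U0 r" using t r by auto
  ultimately have "E \<le> Psi U0 L r" unfolding Psi_def K_def by linarith
  with r show thesis using that by blast
qed

lemma r_minus_props:
  assumes L: "0 < L" and E: "Psi U0 L (balance_radius L) < E"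
  shows "0 < r_minus U0 E L" "r_minus U0 E L < r_L U0 L" "Psi U0 L (r_minus U0 E L) = E"
proof -
  let ?a = "balance_radius L"
  obtain r1 where r1: "0 < r1" "r1 < ?a" "E \<le> Psi U0 L r1"
    using Psi_large_near_zero[OF L balance_radius_pos[OF L]] .
  obtain r where r: "r1 \<le> r" "r \<le> ?a" "Psi U0 L r = E"
    using IVT2'[of "Psi U0 L" ?a E r1] Psi_continuous_on[OF r1(1)] r1 E by auto
  have "r < ?a" using r E by (metis order_less_le)
  have "\<exists>!r. 0 < r \<and> r < r_L U0 L \<and> Psi U0 L r = E"
  proof (rule ex1I[of _ r])
    show "0 < r \<and> r < r_L U0 L \<and> Psi U0 L r = E"
      using r r1 \<open>r < ?a\<close> r_L_eq_balance_radius[OF L] by auto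
    show "r' = r" if "0 < r' \<and> r' < r_L U0 L \<and> Psi U0 L r' = E" for r'
      using that r r1 \<open>r < ?a\<close> Psi_strict_antimono[OF L, of r' r] Psi_strict_antimono[OF L, of r r']
      unfolding r_L_eq_balance_radius[OF L] by (metis less_le_trans linorder_neqE_linordered_idom less_irrefl less_imp_le)
  qed
  from theI'[OF this] show "0 < r_minus U0 E L" "r_minus U0 E L < r_L U0 L" "Psi U0 L (r_minus U0 E L) = E"
    unfolding r_minus_def by auto
qed

lemma r_plus_props:
  assumes L: "0 < L" and E: "Psi U0 L (balance_radius L) < E" "E < 0"
  shows "r_L U0 L < r_plus U0 E L" "Psi U0 L (r_plus U0 E L) = E"
proof -
  let ?a = "balance_radius L"
  obtain R where R: "\<And>r. R \<le> r \<Longrightarrow> E < Psi U0 L r"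
    using order_tendstoD(1)[OF Psi_tendsto_zero E(2)] unfolding eventually_at_top_linorder by blast
  define b where "b = max R ?a"
  have "E < Psi U0 L b" "?a \<le> b" using R unfolding b_def by auto
  then have "\<exists>r\<ge>?a. r \<le> b \<and> Psi U0 L r = E"
    using E(1) by (intro IVT' Psi_continuous_on[OF balance_radius_pos[OF L]]) auto
  then obtain r where r: "?a \<le> r" "Psi U0 L r = E" by blast
  have "?a < r" using r E by (metis order_less_le)
  have "\<exists>!r. r_L U0 L < r \<and> Psi U0 L r = E"
  proof (rule ex1I[of _ r])
    show "r_L U0 L < r \<and> Psi U0 L r = E"
      using r \<open>?a < r\<close> r_L_eq_balance_radius[OF L] by auto
    show "r' = r" if "r_L U0 L < r' \<and> Psi U0 L r' = E" for r'
      using that r \<open>?a < r\<close> Psi_strict_mono[OF L, of r' r] Psi_strict_mono[OF L, of r r']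
      unfolding r_L_eq_balance_radius[OF L] by (metis less_imp_le linorder_neqE_linordered_idom less_irrefl)
  qed
  from theI'[OF this] show "r_L U0 L < r_plus U0 E L" "Psi U0 L (r_plus U0 E L) = E"
    unfolding r_plus_def by auto
qed

lemma turning_points:
  assumes "(E, L) \<in> interior (OmegaEL phi U0)"
  shows "0 < r_minus U0 E L" "r_minus U0 E L < r_plus U0 E L"
    "Psi U0 L (r_minus U0 E L) = E" "Psi U0 L (r_plus U0 E L) = E"
proof -
  note L = interior_OmegaEL(1)[OF assms]
  obtain r where "0 < r" "Psi U0 L r < E" using interior_OmegaEL(3)[OF assms] by blast
  then have Emin: "Psi U0 L (balance_radius L) < E"
    using Psi_balance_radius_less[OF L] by (cases "r = balance_radius L") force+
  have "E < 0" using interior_OmegaEL(2)[OF assms] E0 by simp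
  show "0 < r_minus U0 E L" "r_minus U0 E L < r_plus U0 E L"
    "Psi U0 L (r_minus U0 E L) = E" "Psi U0 L (r_plus U0 E L) = E"
    using r_minus_props[OF L Emin] r_plus_props[OF L Emin \<open>E < 0\<close>] by auto
qed

end

theorem lemmaB2:
  fixes phi U0 rho0 :: "real \<Rightarrow> real" and E0 k S c :: real
  assumes E0: "E0 < 0"
    and ansatz: "phi = king E0 \<or> (0 < k \<and> k < 7/2 \<and> phi = polytrope_iso E0 k)"
    and steady: "isotropic_steady_state phi U0 rho0"
    and S: "S > 0" and c: "c > 0"
    and SR: "S \<le> spatial_radius rho0"
    and rho_lb: "\<forall>r\<in>{0..S}. rho0 r \<ge> c"
  shows "\<forall>(E, L) \<in> interior (OmegaEL phi U0). r_plus U0 E L \<le> S \<longrightarrow>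
           (\<forall>r \<in> {r_minus U0 E L .. r_plus U0 E L}.
              E - Psi U0 L r \<ge> 2 * pi / 3 * c *
                ((r_plus U0 E L - r) * (r - r_minus U0 E L) * (r + r_plus U0 E L + r_minus U0 E L)) / r)
           \<and> period_integrand U0 E L integrable_on {r_minus U0 E L .. r_plus U0 E L}
           \<and> period U0 E L \<le> sqrt (3 * pi / c)"
proof (intro ballI impI, clarify, intro conjI)
  interpret isotropic_dense_core phi U0 rho0 E0 k S c
    using E0 ansatz steady S c rho_lb by unfold_locales
  fix E L assume EL: "(E, L) \<in> interior (OmegaEL phi U0)" and rS: "r_plus U0 E L \<le> S"
  let ?rm = "r_minus U0 E L" and ?rp = "r_plus U0 E L"
  note turning = turning_points[OF EL]
  show gap: "\<forall>r\<in>{?rm..?rp}. 2*pi/3 * c * ((?rp - r) * (r - ?rm) * (r + ?rp + ?rm)) / r \<le> E - Psi U0 L r"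
    using turning rS c
    by (intro ballI energy_gap_lower_bound[where M = mass and L = L]
        Psi_has_derivative mass_lower_bound mass_growth) auto
  have "2*pi/3 * c * ((?rp - r) * (r - ?rm)) \<le> E - Psi U0 L r" if r: "r \<in> {?rm..?rp}" for r
  proof (rule order_trans[OF quadratic_le_cubic_over_r])
    show "2*pi/3 * c * ((?rp - r) * (r - ?rm) * (r + ?rp + ?rm)) / r \<le> E - Psi U0 L r"
      using gap r by blast
  qed (use r turning c in auto)
  note period = period_integral_le[OF c turning(2) Psi_continuous_on[OF turning(1)] turning(3,4) this]
  show "period_integrand U0 E L integrable_on {?rm..?rp}" "period U0 E L \<le> sqrt (3*pi/c)"
    using period unfolding period_def period_integrand_def[abs_def] by auto
qed

end
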